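(* Let $(\Omega,\mathcal{A})$ be a standard Borel space with probability measure $\mu$. If $A$ is a graphop on $(\Omega,\mathcal{A},\mu)$, then there is a unique finite measure $\nu$ on $(\Omega\times\Omega,\mathcal{A}\otimes\mathcal{A})$ such that: (1) $\nu$ is symmetric, i.e. $\nu(S\times T)=\nu(T\times S)$ for all $S,T\in\mathcal{A}$; (2) the marginal of $\nu$ on $\Omega$ is absolutely continuous with respect to $\mu$; (3) $(f,g)_A=\int_{\Omega^2}f(x)g(y)\,d\nu(x,y)$ for all $f,g\in L^\infty(\Omega)$. Conversely, if $\nu$ is a finite measure on $(\Omega\times\Omega,\mathcal{A}\otimes\mathcal{A})$ satisfying (1) and (2), then there is a unique graphop $A$ on $(\Omega,\mathcal{A},\mu)$ satisfying (3).
   Context: A $P$-operator on a probability space $(\Omega,\mathcal{A},\mu)$ is a linear map $A:L^\infty(\Omega)\to L^1(\Omega)$, $v\mapsto vA$, with $\sup_v\|vA\|_1/\|v\|_\infty<\infty$. Define $(f,g)_A:=\int_\Omega (fA)g\,d\mu$. $A$ is self-adjoint if $(v,w)_A=(w,v)_A$ for all $v,w\in L^\infty(\Omega)$, and positivity-preserving if $v\ge0$ a.e. implies $vA\ge0$ a.e. A graphop is a self-adjoint, positivity-preserving $P$-operator. *)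

theory Defs
  imports "HOL-Probability.Probability"
begin

definition Linf :: "'a measure \<Rightarrow> ('a \<Rightarrow> real) set" where
  "Linf M = {v. v \<in> borel_measurable M \<and> esssup M (\<lambda>x. ereal \<bar>v x\<bar>) < \<infinity>}"

definition linf_norm :: "'a measure \<Rightarrow> ('a \<Rightarrow> real) \<Rightarrow> real" where
  "linf_norm M v = real_of_ereal (esssup M (\<lambda>x. ereal \<bar>v x\<bar>))"

text \<open>A P-operator: a bounded linear map L^infinity -> L^1, acting on representatives,
  well defined on a.e.-classes (all identities between L^1 elements hold a.e.).\<close>
definition P_operator :: "'a measure \<Rightarrow> (('a \<Rightarrow> real) \<Rightarrow> ('a \<Rightarrow> real)) \<Rightarrow> bool" where
  "P_operator M A \<longleftrightarrow>
     (\<forall>v\<in>Linf M. integrable M (A v)) \<and>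
     (\<forall>v\<in>Linf M. \<forall>w\<in>Linf M. (AE x in M. v x = w x) \<longrightarrow> (AE x in M. A v x = A w x)) \<and>
     (\<forall>v\<in>Linf M. \<forall>w\<in>Linf M. \<forall>a b::real.
        AE x in M. A (\<lambda>y. a * v y + b * w y) x = a * A v x + b * A w x) \<and>
     (\<exists>C. \<forall>v\<in>Linf M. (\<integral>x. \<bar>A v x\<bar> \<partial>M) \<le> C * linf_norm M v)"

definition op_form :: "'a measure \<Rightarrow> (('a \<Rightarrow> real) \<Rightarrow> ('a \<Rightarrow> real)) \<Rightarrow> ('a \<Rightarrow> real) \<Rightarrow> ('a \<Rightarrow> real) \<Rightarrow> real" where
  "op_form M A f g = (\<integral>x. A f x * g x \<partial>M)"

definition self_adjoint_op :: "'a measure \<Rightarrow> (('a \<Rightarrow> real) \<Rightarrow> ('a \<Rightarrow> real)) \<Rightarrow> bool" where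
  "self_adjoint_op M A \<longleftrightarrow> (\<forall>v\<in>Linf M. \<forall>w\<in>Linf M. op_form M A v w = op_form M A w v)"

definition positivity_preserving :: "'a measure \<Rightarrow> (('a \<Rightarrow> real) \<Rightarrow> ('a \<Rightarrow> real)) \<Rightarrow> bool" where
  "positivity_preserving M A \<longleftrightarrow>
     (\<forall>v\<in>Linf M. (AE x in M. 0 \<le> v x) \<longrightarrow> (AE x in M. 0 \<le> A v x))"

definition graphop :: "'a measure \<Rightarrow> (('a \<Rightarrow> real) \<Rightarrow> ('a \<Rightarrow> real)) \<Rightarrow> bool" where
  "graphop M A \<longleftrightarrow> P_operator M A \<and> self_adjoint_op M A \<and> positivity_preserving M A"

definition symmetric_measure :: "'a measure \<Rightarrow> ('a \<times> 'a) measure \<Rightarrow> bool" where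
  "symmetric_measure M N \<longleftrightarrow>
     (\<forall>S\<in>sets M. \<forall>T\<in>sets M. emeasure N (S \<times> T) = emeasure N (T \<times> S))"

definition marginal_ac :: "'a measure \<Rightarrow> ('a \<times> 'a) measure \<Rightarrow> bool" where
  "marginal_ac M N \<longleftrightarrow> absolutely_continuous M (distr N M fst)"

definition represents :: "'a measure \<Rightarrow> (('a \<Rightarrow> real) \<Rightarrow> ('a \<Rightarrow> real)) \<Rightarrow> ('a \<times> 'a) measure \<Rightarrow> bool" where
  "represents M A N \<longleftrightarrow>
     (\<forall>f\<in>Linf M. \<forall>g\<in>Linf M. op_form M A f g = (\<integral>p. f (fst p) * g (snd p) \<partial>N))"

definition admissible_measure :: "'a measure \<Rightarrow> ('a \<times> 'a) measure \<Rightarrow> bool" where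
  "admissible_measure M N \<longleftrightarrow> sets N = sets (M \<Otimes>\<^sub>M M) \<and> finite_measure N
     \<and> symmetric_measure M N \<and> marginal_ac M N"

end

theory Submission
  imports Defs
begin

text \<open>
  Given \<open>\<nu>\<close>, the operator sends \<open>v\<close> to the Radon-Nikodym derivative with respect to \<open>\<mu>\<close>
  of \<open>T \<mapsto> \<integral> v(x) 1\<^sub>T(y) d\<nu>(x,y)\<close>, which exists because the marginal of \<open>\<nu>\<close> is absolutely
  continuous; the symmetry of \<open>\<nu>\<close> makes it self-adjoint.

  Conversely, a graphop \<open>A\<close> gives the set function \<open>r(S,T) = (1\<^sub>S, 1\<^sub>T)\<^sub>A\<close> on rectangles.
  Positivity of \<open>A\<close>, applied to the sections \<open>x \<mapsto> \<Sum> c\<^sub>i 1\<^sub>S\<^sub>i(x) 1\<^sub>T\<^sub>i(y)\<close>, makes \<open>r\<close> monotone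
  on linear combinations of rectangles, hence finitely additive. Countable additivity follows
  from regularity of the finite Borel measure \<open>E \<mapsto> r(\<Omega>, E)\<close> on the Polish space: a rectangle
  is approximated from inside by compact and from outside by open rectangles, and compactness
  reduces a countable cover to a finite one. Caratheodory's extension then yields \<open>\<nu>\<close>.

  Uniqueness on both sides holds because a finite measure on \<open>\<Omega>\<^sup>2\<close> is determined by its values on
  rectangles, and a self-adjoint operator by its values \<open>(1\<^sub>S, 1\<^sub>T)\<^sub>A\<close>.
\<close>

section \<open>Essentially bounded functions and P-operators\<close>

lemma LinfI:
  assumes "v \<in> borel_measurable M" "AE x in M. \<bar>v x\<bar> \<le> c"
  shows "v \<in> Linf M"
proof -
  have "esssup M (\<lambda>x. ereal \<bar>v x\<bar>) \<le> ereal c" using assms by (intro esssup_I) auto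
  with assms(1) show ?thesis unfolding Linf_def by (auto intro: le_less_trans)
qed

lemma LinfE:
  assumes "v \<in> Linf M"
  obtains c where "v \<in> borel_measurable M" "AE x in M. \<bar>v x\<bar> \<le> c"
proof
  let ?e = "esssup M (\<lambda>x. ereal \<bar>v x\<bar>)"
  have "?e < \<infinity>" using assms by (simp add: Linf_def)
  show "v \<in> borel_measurable M" using assms by (simp add: Linf_def)
  show "AE x in M. \<bar>v x\<bar> \<le> max 0 (real_of_ereal ?e)"
    using esssup_AE[of "\<lambda>x. ereal \<bar>v x\<bar>" M]
    by eventually_elim (use \<open>?e < \<infinity>\<close> in \<open>cases ?e; auto\<close>)
qed

lemma Linf_lincomb:
  assumes "v \<in> Linf M" "w \<in> Linf M"
  shows "(\<lambda>x. a * v x + b * w x) \<in> Linf M"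
proof -
  obtain c where v: "v \<in> borel_measurable M" "AE x in M. \<bar>v x\<bar> \<le> c" using assms(1) by (rule LinfE)
  obtain d where w: "w \<in> borel_measurable M" "AE x in M. \<bar>w x\<bar> \<le> d" using assms(2) by (rule LinfE)
  have "AE x in M. \<bar>a * v x + b * w x\<bar> \<le> \<bar>a\<bar> * c + \<bar>b\<bar> * d"
    using v(2) w(2)
  proof eventually_elim
    case (elim x)
    have "\<bar>a * v x + b * w x\<bar> \<le> \<bar>a\<bar> * \<bar>v x\<bar> + \<bar>b\<bar> * \<bar>w x\<bar>"
      by (metis abs_mult abs_triangle_ineq)
    also have "\<dots> \<le> \<bar>a\<bar> * c + \<bar>b\<bar> * d" using elim by (intro add_mono mult_left_mono) auto
    finally show ?case .
  qed
  with v(1) w(1) show ?thesis by (intro LinfI) auto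
qed

lemma Linf_const: "(\<lambda>x. c) \<in> Linf M"
  by (rule LinfI[where c="\<bar>c\<bar>"]) auto

lemma Linf_indicator: "S \<in> sets M \<Longrightarrow> indicator S \<in> Linf M"
  by (rule LinfI[where c=1]) (auto simp: indicator_def)

lemma Linf_sum:
  assumes "finite I" "\<And>i. i \<in> I \<Longrightarrow> f i \<in> Linf M"
  shows "(\<lambda>x. \<Sum>i\<in>I. c i * f i x) \<in> Linf M"
  using assms
proof (induction I rule: finite_induct)
  case empty
  then show ?case using Linf_const[of 0] by simp
next
  case (insert j I)
  then have "(\<lambda>x. c j * f j x + 1 * (\<Sum>i\<in>I. c i * f i x)) \<in> Linf M"
    by (intro Linf_lincomb) auto
  with insert show ?case by simp
qed

lemma
  assumes "v \<in> Linf M"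
  shows Linf_pos_part: "(\<lambda>x. max 0 (v x)) \<in> Linf M"
    and Linf_neg_part: "(\<lambda>x. max 0 (- v x)) \<in> Linf M"
proof -
  obtain c where v: "v \<in> borel_measurable M" and c: "AE x in M. \<bar>v x\<bar> \<le> c"
    using assms by (rule LinfE)
  from c have "AE x in M. \<bar>max 0 (v x)\<bar> \<le> c" "AE x in M. \<bar>max 0 (- v x)\<bar> \<le> c"
    by (auto elim!: AE_mp)
  moreover have "(\<lambda>x. max 0 (v x)) \<in> borel_measurable M" "(\<lambda>x. max 0 (- v x)) \<in> borel_measurable M"
    using v by measurable
  ultimately show "(\<lambda>x. max 0 (v x)) \<in> Linf M" "(\<lambda>x. max 0 (- v x)) \<in> Linf M"
    by (blast intro: LinfI)+
qed

lemma (in prob_space) AE_abs_le_linf_norm: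
  assumes "v \<in> Linf M"
  shows "AE x in M. \<bar>v x\<bar> \<le> linf_norm M v"
proof -
  let ?e = "esssup M (\<lambda>x. ereal \<bar>v x\<bar>)"
  have fin: "?e < \<infinity>" using assms by (simp add: Linf_def)
  have "0 = esssup M (\<lambda>x. ereal 0)" by (simp add: esssup_const emeasure_space_1)
  also have "\<dots> \<le> ?e" by (intro esssup_mono) auto
  finally have nonneg: "0 \<le> ?e" .
  show ?thesis
    using esssup_AE[of "\<lambda>x. ereal \<bar>v x\<bar>" M]
  proof eventually_elim
    case (elim x)
    with fin nonneg show ?case by (cases ?e) (auto simp: linf_norm_def)
  qed
qed

lemma integrable_mult_bounded:
  fixes f g :: "'a \<Rightarrow> real"
  assumes f: "integrable M f" and g: "g \<in> borel_measurable M" and "AE x in M. \<bar>g x\<bar> \<le> c"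
  shows "integrable M (\<lambda>x. f x * g x)"
proof (rule Bochner_Integration.integrable_bound)
  show "integrable M (\<lambda>x. c * f x)" using f by simp
  show "(\<lambda>x. f x * g x) \<in> borel_measurable M" using borel_measurable_integrable[OF f] g by measurable
  show "AE x in M. norm (f x * g x) \<le> norm (c * f x)"
    using assms(3)
  proof eventually_elim
    case (elim x)
    have "\<bar>f x\<bar> * \<bar>g x\<bar> \<le> \<bar>f x\<bar> * \<bar>c\<bar>" using elim by (intro mult_left_mono) auto
    then show ?case by (simp add: abs_mult mult.commute)
  qed
qed

lemma AE_eq_if_indicator_integrals_eq:
  fixes f g :: "'a \<Rightarrow> real"
  assumes "integrable M f" "integrable M g"
    and "\<And>S. S \<in> sets M \<Longrightarrow> (\<integral>x. f x * indicator S x \<partial>M) = (\<integral>x. g x * indicator S x \<partial>M)"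
  shows "AE x in M. f x = g x"
  using assms by (intro density_unique_real) (auto simp: set_lebesgue_integral_def mult.commute)

lemma AE_nonneg_if_indicator_integrals_nonneg:
  fixes f :: "'a \<Rightarrow> real"
  assumes f: "integrable M f" and "\<And>S. S \<in> sets M \<Longrightarrow> 0 \<le> (\<integral>x. f x * indicator S x \<partial>M)"
  shows "AE x in M. 0 \<le> f x"
proof -
  define S where "S = {x \<in> space M. f x < 0}"
  have S: "S \<in> sets M" unfolding S_def using borel_measurable_integrable[OF f] by measurable
  have i: "integrable M (\<lambda>x. - (f x * indicator S x))"
    using integrable_real_mult_indicator[OF S f] by simp
  have nonneg: "AE x in M. 0 \<le> - (f x * indicator S x)" by (auto simp: S_def indicator_def)
  have "(\<integral>x. - (f x * indicator S x) \<partial>M) = 0"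
    using assms(2)[OF S] integral_nonneg_AE[OF nonneg] by simp
  then have "AE x in M. - (f x * indicator S x) = 0"
    using integral_nonneg_eq_0_iff_AE[OF i nonneg] by simp
  then show ?thesis
    using AE_space by eventually_elim (auto simp: S_def indicator_def split: if_splits)
qed

lemma P_operator_integrable: "P_operator M A \<Longrightarrow> v \<in> Linf M \<Longrightarrow> integrable M (A v)"
  by (simp add: P_operator_def)

lemma P_operator_lincomb:
  "P_operator M A \<Longrightarrow> v \<in> Linf M \<Longrightarrow> w \<in> Linf M \<Longrightarrow>
    AE x in M. A (\<lambda>y. a * v y + b * w y) x = a * A v x + b * A w x"
  unfolding P_operator_def by blast

lemma P_operator_sum:
  assumes A: "P_operator M A" and "finite I" "\<And>i. i \<in> I \<Longrightarrow> f i \<in> Linf M"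
  shows "AE x in M. A (\<lambda>y. \<Sum>i\<in>I. c i * f i y) x = (\<Sum>i\<in>I. c i * A (f i) x)"
  using assms(2,3)
proof (induction I rule: finite_induct)
  case empty
  show ?case using P_operator_lincomb[OF A Linf_const Linf_const, of 0 0 0 0] by simp
next
  case (insert j I)
  have "AE x in M. A (\<lambda>y. c j * f j y + 1 * (\<Sum>i\<in>I. c i * f i y)) x
      = c j * A (f j) x + 1 * A (\<lambda>y. \<Sum>i\<in>I. c i * f i y) x"
    using insert by (intro P_operator_lincomb[OF A] Linf_sum) auto
  with insert show ?case by (auto elim: AE_mp)
qed

lemma op_form_AE_cong:
  assumes "integrable M (A v)" "integrable M (B v)" "w \<in> Linf M"
    and "AE x in M. A v x = B v x"
  shows "op_form M A v w = op_form M B v w"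
proof -
  have "w \<in> borel_measurable M" using assms(3) by (rule LinfE)
  with assms show ?thesis
    unfolding op_form_def
    by (intro integral_cong_AE) (auto simp: borel_measurable_integrable elim!: AE_mp)
qed

text \<open>Self-adjointness moves an arbitrary \<open>v\<close> into the second argument of the form,
  where testing against indicators suffices.\<close>

lemma self_adjoint_op_AE_eq:
  assumes A: "P_operator M A" "self_adjoint_op M A" and B: "P_operator M B" "self_adjoint_op M B"
    and rect: "\<And>S T. S \<in> sets M \<Longrightarrow> T \<in> sets M \<Longrightarrow>
      op_form M A (indicator S) (indicator T) = op_form M B (indicator S) (indicator T)"
    and v: "v \<in> Linf M"
  shows "AE x in M. A v x = B v x"
proof (rule AE_eq_if_indicator_integrals_eq)
  show "integrable M (A v)" "integrable M (B v)" using A(1) B(1) v by (auto intro: P_operator_integrable)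
  fix T assume T: "T \<in> sets M"
  have "AE x in M. A (indicator T) x = B (indicator T) x"
    using T rect[OF T, unfolded op_form_def]
    by (intro AE_eq_if_indicator_integrals_eq P_operator_integrable Linf_indicator A(1) B(1))
  then have "op_form M A (indicator T) v = op_form M B (indicator T) v"
    using A(1) B(1) T v by (intro op_form_AE_cong P_operator_integrable Linf_indicator)
  moreover have "op_form M A v (indicator T) = op_form M A (indicator T) v"
    using A(2) T v by (simp add: self_adjoint_op_def Linf_indicator)
  moreover have "op_form M B v (indicator T) = op_form M B (indicator T) v"
    using B(2) T v by (simp add: self_adjoint_op_def Linf_indicator)
  ultimately show "(\<integral>x. A v x * indicator T x \<partial>M) = (\<integral>x. B v x * indicator T x \<partial>M)"
    by (simp add: op_form_def)
qed

lemma represents_AE_unique: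
  assumes "graphop M A" "graphop M B" "represents M A N" "represents M B N" "v \<in> Linf M"
  shows "AE x in M. A v x = B v x"
  using assms by (intro self_adjoint_op_AE_eq) (auto simp: graphop_def represents_def Linf_indicator)

section \<open>Rectangles and regularity\<close>

lemma measure_eqI_rectangles:
  assumes sets1: "sets N1 = sets (M1 \<Otimes>\<^sub>M M2)" and sets2: "sets N2 = sets (M1 \<Otimes>\<^sub>M M2)"
    and fin: "finite_measure N1"
    and eq: "\<And>S T. S \<in> sets M1 \<Longrightarrow> T \<in> sets M2 \<Longrightarrow> emeasure N1 (S \<times> T) = emeasure N2 (S \<times> T)"
  shows "N1 = N2"
proof (rule measure_eqI_generator_eq[where E="{S \<times> T |S T. S \<in> sets M1 \<and> T \<in> sets M2}"
      and \<Omega>="space M1 \<times> space M2" and A="\<lambda>_. space M1 \<times> space M2"])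
  show "Int_stable {S \<times> T |S T. S \<in> sets M1 \<and> T \<in> sets M2}"
    by (rule Int_stable_pair_measure_generator)
  show "{S \<times> T |S T. S \<in> sets M1 \<and> T \<in> sets M2} \<subseteq> Pow (space M1 \<times> space M2)"
    by (auto dest: sets.sets_into_space)
  show "sets N1 = sigma_sets (space M1 \<times> space M2) {S \<times> T |S T. S \<in> sets M1 \<and> T \<in> sets M2}"
    "sets N2 = sigma_sets (space M1 \<times> space M2) {S \<times> T |S T. S \<in> sets M1 \<and> T \<in> sets M2}"
    by (simp_all add: sets1 sets2 sets_pair_measure)
  have "space N1 = space M1 \<times> space M2"
    using sets_eq_imp_space_eq[OF sets1] by (simp add: space_pair_measure)
  then show "emeasure N1 (space M1 \<times> space M2) \<noteq> \<infinity>"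
    using finite_measure.emeasure_finite[OF fin, of "space N1"] by simp
qed (use eq in auto)

lemma semiring_of_sets_rectangles:
  "semiring_of_sets (space M1 \<times> space M2) {S \<times> T |S T. S \<in> sets M1 \<and> T \<in> sets M2}"
proof (unfold_locales, safe)
  fix a b c d assume ab: "a \<in> sets M1" "b \<in> sets M2" and cd: "c \<in> sets M1" "d \<in> sets M2"
  let ?C = "{(a - c) \<times> b, (a \<inter> c) \<times> (b - d)}"
  have "?C \<subseteq> {S \<times> T |S T. S \<in> sets M1 \<and> T \<in> sets M2}" "disjoint ?C" "a \<times> b - c \<times> d = \<Union>?C"
    using ab cd by (auto simp: disjoint_def)
  then show "\<exists>C\<subseteq>{S \<times> T |S T. S \<in> sets M1 \<and> T \<in> sets M2}. finite C \<and> disjoint C \<and> a \<times> b - c \<times> d = \<Union>C"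
    by (intro exI[of _ ?C]) auto
  show "\<exists>S T. a \<times> b \<inter> c \<times> d = S \<times> T \<and> S \<in> sets M1 \<and> T \<in> sets M2"
    using ab cd by (intro exI[of _ "a \<inter> c"] exI[of _ "b \<inter> d"]) auto
qed (auto dest: sets.sets_into_space)

lemma finite_borel_measure_inner_compact:
  fixes \<mu> :: "'a::polish_space measure"
  assumes sets: "sets \<mu> = sets borel" and "finite_measure \<mu>" and S: "S \<in> sets borel" and "0 < e"
  obtains K where "compact K" "K \<subseteq> S" "measure \<mu> (S - K) < e"
proof -
  interpret finite_measure \<mu> by fact
  have "\<exists>K. compact K \<and> K \<subseteq> S \<and> measure \<mu> S - e < measure \<mu> K"
  proof (cases "measure \<mu> S < e")
    case True
    then show ?thesis by (intro exI[of _ "{}"]) auto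
  next
    case False
    then have "ennreal (measure \<mu> S - e) < emeasure \<mu> S"
      using \<open>0 < e\<close> by (simp add: emeasure_eq_measure ennreal_less_iff)
    also have "\<dots> = (SUP K \<in> {K. K \<subseteq> S \<and> compact K}. emeasure \<mu> K)"
      using S by (intro inner_regular[OF sets]) auto
    finally obtain K where "K \<subseteq> S" "compact K" "ennreal (measure \<mu> S - e) < emeasure \<mu> K"
      by (auto simp: less_SUP_iff)
    then show ?thesis
      using False by (intro exI[of _ K]) (auto simp: emeasure_eq_measure ennreal_less_iff)
  qed
  then obtain K where K: "compact K" "K \<subseteq> S" "measure \<mu> S - e < measure \<mu> K" by blast
  have "K \<in> sets \<mu>" using K(1) by (simp add: sets compact_imp_closed borel_closed)
  then have "measure \<mu> (S - K) = measure \<mu> S - measure \<mu> K"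
    using K(2) S sets by (intro finite_measure_Diff) auto
  with K that show ?thesis by simp
qed

lemma finite_borel_measure_outer_open:
  fixes \<mu> :: "'a::polish_space measure"
  assumes sets: "sets \<mu> = sets borel" and "finite_measure \<mu>" and S: "S \<in> sets borel" and "0 < e"
  obtains U where "open U" "S \<subseteq> U" "measure \<mu> (U - S) < e"
proof -
  interpret finite_measure \<mu> by fact
  have "(INF U \<in> {U. S \<subseteq> U \<and> open U}. emeasure \<mu> U) = emeasure \<mu> S"
    using S by (intro outer_regular[OF sets, symmetric]) auto
  also have "\<dots> < ennreal (measure \<mu> S + e)"
    using \<open>0 < e\<close> by (simp add: emeasure_eq_measure ennreal_less_iff)
  finally obtain U where U: "S \<subseteq> U" "open U" "emeasure \<mu> U < ennreal (measure \<mu> S + e)"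
    by (auto simp: INF_less_iff)
  then have "measure \<mu> U < measure \<mu> S + e"
    by (simp add: emeasure_eq_measure ennreal_less_iff)
  moreover have "U \<in> sets \<mu>" using U(2) by (simp add: sets borel_open)
  then have "measure \<mu> (U - S) = measure \<mu> U - measure \<mu> S"
    using U(1) S sets by (intro finite_measure_Diff) auto
  ultimately show ?thesis using U that by simp
qed


lemma compact_Times_subset_finite_Union:
  assumes "compact K" "compact L" "\<And>n. open (U n)" "\<And>n. open (V n)"
    and "K \<times> L \<subseteq> (\<Union>n. U n \<times> V n)"
  obtains k :: nat where "K \<times> L \<subseteq> (\<Union>n<k. U n \<times> V n)"
proof -
  obtain F where "finite F" "K \<times> L \<subseteq> (\<Union>n\<in>F. U n \<times> V n)"
  proof (rule compactE_image[OF compact_Times[OF assms(1,2)], of UNIV "\<lambda>n. U n \<times> V n"])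
    show "open (U n \<times> V n)" for n using assms(3,4) by (rule open_Times)
  qed (use assms(5) in auto)
  moreover obtain k where "F \<subseteq> {..<k}" using finite_nat_bounded[OF \<open>finite F\<close>] by blast
  ultimately show ?thesis using that by blast
qed

section \<open>The graphop of an admissible measure\<close>

locale edge_measure = prob_space M for M :: "'a measure" +
  fixes N :: "('a \<times> 'a) measure"
  assumes admissible: "admissible_measure M N"
begin

lemma sets_N [measurable_cong]: "sets N = sets (M \<Otimes>\<^sub>M M)"
  using admissible by (simp add: admissible_measure_def)

lemma space_N: "space N = space M \<times> space M"
  using sets_eq_imp_space_eq[OF sets_N] by (simp add: space_pair_measure)

lemma finite_measure_N: "finite_measure N"
  using admissible unfolding admissible_measure_def by blast

sublocale N: finite_measure N
  by (rule finite_measure_N)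

lemma emeasure_N_Times_commute:
  "S \<in> sets M \<Longrightarrow> T \<in> sets M \<Longrightarrow> emeasure N (S \<times> T) = emeasure N (T \<times> S)"
  using admissible by (simp add: admissible_measure_def symmetric_measure_def)

lemma distr_swap: "distr N (M \<Otimes>\<^sub>M M) (\<lambda>p. (snd p, fst p)) = N"
proof (rule sym, rule measure_eqI_rectangles)
  show "sets N = sets (M \<Otimes>\<^sub>M M)" "sets (distr N (M \<Otimes>\<^sub>M M) (\<lambda>p. (snd p, fst p))) = sets (M \<Otimes>\<^sub>M M)"
    by (simp_all add: sets_N)
  show "finite_measure N" by (rule finite_measure_N)
  fix S T assume S: "S \<in> sets M" and T: "T \<in> sets M"
  have "(\<lambda>p. (snd p, fst p)) -` (S \<times> T) \<inter> space N = T \<times> S"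
    using sets.sets_into_space[OF S] sets.sets_into_space[OF T] by (auto simp: space_N)
  then show "emeasure N (S \<times> T) = emeasure (distr N (M \<Otimes>\<^sub>M M) (\<lambda>p. (snd p, fst p))) (S \<times> T)"
    using S T by (simp add: emeasure_distr emeasure_N_Times_commute)
qed

lemma integral_swap:
  fixes F :: "'a \<times> 'a \<Rightarrow> real"
  assumes "F \<in> borel_measurable (M \<Otimes>\<^sub>M M)"
  shows "(\<integral>p. F (snd p, fst p) \<partial>N) = (\<integral>p. F p \<partial>N)"
  using integral_distr[of "\<lambda>p. (snd p, fst p)" N "M \<Otimes>\<^sub>M M" F] assms by (simp add: distr_swap)

lemma AE_fst:
  assumes "AE x in M. P x"
  shows "AE p in N. P (fst p)"
proof -
  have "absolutely_continuous M (distr N M fst)"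
    using admissible unfolding admissible_measure_def marginal_ac_def by blast
  from absolutely_continuous_AE[OF sets_distr this assms]
  have "AE x in distr N M fst. P x" .
  moreover have "fst \<in> N \<rightarrow>\<^sub>M M" by measurable
  ultimately show ?thesis by (rule AE_distrD[rotated])
qed

lemma AE_snd:
  assumes "AE x in M. P x"
  shows "AE p in N. P (snd p)"
proof -
  have "AE p in distr N (M \<Otimes>\<^sub>M M) (\<lambda>p. (snd p, fst p)). P (fst p)"
    unfolding distr_swap by (rule AE_fst[OF assms])
  moreover have "(\<lambda>p. (snd p, fst p)) \<in> N \<rightarrow>\<^sub>M M \<Otimes>\<^sub>M M" by measurable
  ultimately have "AE p in N. P (fst (snd p, fst p))" by (rule AE_distrD[rotated])
  then show ?thesis by simp
qed

lemma integrable_Linf_fst: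
  assumes "v \<in> Linf M"
  shows "integrable N (\<lambda>p. v (fst p))"
proof -
  obtain c where [measurable]: "v \<in> borel_measurable M" and c: "AE x in M. \<bar>v x\<bar> \<le> c"
    using assms by (rule LinfE)
  show ?thesis using AE_fst[OF c] by (intro N.integrable_const_bound[where B=c]) auto
qed

lemma integrable_Linf_fst_snd:
  assumes "f \<in> Linf M" "g \<in> Linf M"
  shows "integrable N (\<lambda>p. f (fst p) * g (snd p))"
proof -
  obtain c where [measurable]: "g \<in> borel_measurable M" and c: "AE x in M. \<bar>g x\<bar> \<le> c"
    using assms(2) by (rule LinfE)
  show ?thesis
    using integrable_Linf_fst[OF assms(1)] _ AE_snd[OF c] by (rule integrable_mult_bounded) measurable
qed

definition weighted_marginal :: "('a \<Rightarrow> real) \<Rightarrow> 'a measure" where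
  "weighted_marginal v = distr (density N (\<lambda>p. ennreal (v (fst p)))) M snd"

lemma sets_weighted_marginal [simp, measurable_cong]: "sets (weighted_marginal v) = sets M"
  by (simp add: weighted_marginal_def)

lemma integral_weighted_marginal:
  fixes g :: "'a \<Rightarrow> real"
  assumes [measurable]: "v \<in> borel_measurable M" "g \<in> borel_measurable M" and "\<And>x. 0 \<le> v x"
  shows "integral\<^sup>L (weighted_marginal v) g = (\<integral>p. v (fst p) * g (snd p) \<partial>N)"
proof -
  have "integral\<^sup>L (weighted_marginal v) g = (\<integral>p. g (snd p) \<partial>density N (\<lambda>p. ennreal (v (fst p))))"
    unfolding weighted_marginal_def by (rule integral_distr) measurable
  also have "\<dots> = (\<integral>p. v (fst p) * g (snd p) \<partial>N)"
    using assms(3) by (subst integral_density) auto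
  finally show ?thesis .
qed

lemma finite_measure_weighted_marginal:
  assumes "v \<in> Linf M" "\<And>x. 0 \<le> v x"
  shows "finite_measure (weighted_marginal v)"
proof (rule finite_measureI)
  have [measurable]: "v \<in> borel_measurable M" using assms(1) by (rule LinfE)
  have "snd -` space M \<inter> space N = space N" by (auto simp: space_N)
  then have "emeasure (weighted_marginal v) (space (weighted_marginal v))
      = emeasure (density N (\<lambda>p. ennreal (v (fst p)))) (space N)"
    by (simp add: weighted_marginal_def emeasure_distr)
  also have "\<dots> = (\<integral>\<^sup>+p. ennreal (v (fst p)) \<partial>N)"
    by (subst emeasure_density) (auto intro!: nn_integral_cong)
  also have "\<dots> = ennreal (\<integral>p. v (fst p) \<partial>N)"
    using integrable_Linf_fst[OF assms(1)] assms(2) by (intro nn_integral_eq_integral) auto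
  finally show "emeasure (weighted_marginal v) (space (weighted_marginal v)) \<noteq> \<infinity>" by simp
qed

lemma absolutely_continuous_weighted_marginal:
  assumes [measurable]: "v \<in> borel_measurable M"
  shows "absolutely_continuous M (weighted_marginal v)"
  unfolding absolutely_continuous_def
proof
  fix S assume S: "S \<in> null_sets M"
  have "AE p in N. snd p \<notin> S" using AE_snd[OF AE_not_in[OF S]] .
  then show "S \<in> null_sets (weighted_marginal v)"
    using S unfolding weighted_marginal_def
    by (subst null_sets_distr_iff) (auto simp: null_sets_density_iff elim: AE_mp)
qed

lemma weighted_marginal_cong_AE:
  assumes [measurable]: "v \<in> borel_measurable M" "w \<in> borel_measurable M"
    and "AE x in M. v x = w x"
  shows "weighted_marginal v = weighted_marginal w"
proof -
  have "density N (\<lambda>p. ennreal (v (fst p))) = density N (\<lambda>p. ennreal (w (fst p)))"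
  proof (rule density_cong)
    show "AE p in N. ennreal (v (fst p)) = ennreal (w (fst p))"
      using AE_fst[OF assms(3)] by eventually_elim simp
  qed measurable
  then show ?thesis by (simp add: weighted_marginal_def)
qed

lemma
  assumes v: "v \<in> Linf M" "\<And>x. 0 \<le> v x" and g: "g \<in> Linf M"
  shows integrable_RN_deriv_weighted_marginal:
      "integrable M (\<lambda>y. enn2real (RN_deriv M (weighted_marginal v) y) * g y)"
    and integral_RN_deriv_weighted_marginal:
      "(\<integral>y. enn2real (RN_deriv M (weighted_marginal v) y) * g y \<partial>M) = (\<integral>p. v (fst p) * g (snd p) \<partial>N)"
proof -
  interpret V: finite_measure "weighted_marginal v"
    using v by (rule finite_measure_weighted_marginal)
  have [measurable]: "v \<in> borel_measurable M" using v(1) by (rule LinfE)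
  obtain c where [measurable]: "g \<in> borel_measurable M" and c: "AE x in M. \<bar>g x\<bar> \<le> c"
    using g by (rule LinfE)
  have ac: "absolutely_continuous M (weighted_marginal v)"
    by (rule absolutely_continuous_weighted_marginal) measurable
  have "AE x in weighted_marginal v. \<bar>g x\<bar> \<le> c"
    using absolutely_continuous_AE[OF sets_weighted_marginal ac c] .
  then have "integrable (weighted_marginal v) g"
    by (intro V.integrable_const_bound[where B=c]) auto
  then show "integrable M (\<lambda>y. enn2real (RN_deriv M (weighted_marginal v) y) * g y)"
    using RN_deriv_integrable[OF V.sigma_finite_measure_axioms ac sets_weighted_marginal] by simp
  have "(\<integral>y. enn2real (RN_deriv M (weighted_marginal v) y) * g y \<partial>M) = integral\<^sup>L (weighted_marginal v) g"
    using RN_deriv_integral[OF V.sigma_finite_measure_axioms ac sets_weighted_marginal] by simp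
  also have "\<dots> = (\<integral>p. v (fst p) * g (snd p) \<partial>N)"
    using v(2) by (intro integral_weighted_marginal) measurable
  finally show "(\<integral>y. enn2real (RN_deriv M (weighted_marginal v) y) * g y \<partial>M) = (\<integral>p. v (fst p) * g (snd p) \<partial>N)" .
qed

text \<open>Splitting \<open>v\<close> into positive and negative parts keeps the weighted marginals
  positive measures, to which the Radon-Nikodym theorem applies.\<close>

definition graphop_of :: "('a \<Rightarrow> real) \<Rightarrow> 'a \<Rightarrow> real" where
  "graphop_of v y =
     enn2real (RN_deriv M (weighted_marginal (\<lambda>x. max 0 (v x))) y)
   - enn2real (RN_deriv M (weighted_marginal (\<lambda>x. max 0 (- v x))) y)"

lemma
  assumes v: "v \<in> Linf M" and g: "g \<in> Linf M"
  shows integrable_graphop_of_mult: "integrable M (\<lambda>y. graphop_of v y * g y)"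
    and integral_graphop_of_mult: "(\<integral>y. graphop_of v y * g y \<partial>M) = (\<integral>p. v (fst p) * g (snd p) \<partial>N)"
proof -
  note pos = integrable_RN_deriv_weighted_marginal[OF Linf_pos_part[OF v] _ g]
    integral_RN_deriv_weighted_marginal[OF Linf_pos_part[OF v] _ g]
  note neg = integrable_RN_deriv_weighted_marginal[OF Linf_neg_part[OF v] _ g]
    integral_RN_deriv_weighted_marginal[OF Linf_neg_part[OF v] _ g]
  have split: "graphop_of v y * g y =
      enn2real (RN_deriv M (weighted_marginal (\<lambda>x. max 0 (v x))) y) * g y
    - enn2real (RN_deriv M (weighted_marginal (\<lambda>x. max 0 (- v x))) y) * g y" for y
    by (simp add: graphop_of_def left_diff_distrib)
  show "integrable M (\<lambda>y. graphop_of v y * g y)"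
    unfolding split using pos neg by auto
  have "(\<integral>y. graphop_of v y * g y \<partial>M)
      = (\<integral>p. max 0 (v (fst p)) * g (snd p) \<partial>N) - (\<integral>p. max 0 (- v (fst p)) * g (snd p) \<partial>N)"
    unfolding split using pos neg by (subst Bochner_Integration.integral_diff) auto
  also have "\<dots> = (\<integral>p. max 0 (v (fst p)) * g (snd p) - max 0 (- v (fst p)) * g (snd p) \<partial>N)"
    using integrable_Linf_fst_snd[OF Linf_pos_part[OF v] g] integrable_Linf_fst_snd[OF Linf_neg_part[OF v] g]
    by (subst Bochner_Integration.integral_diff) auto
  also have "\<dots> = (\<integral>p. v (fst p) * g (snd p) \<partial>N)"
    by (rule Bochner_Integration.integral_cong) (auto simp: max_def algebra_simps)
  finally show "(\<integral>y. graphop_of v y * g y \<partial>M) = (\<integral>p. v (fst p) * g (snd p) \<partial>N)" .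
qed

lemma integrable_graphop_of: "v \<in> Linf M \<Longrightarrow> integrable M (graphop_of v)"
  using integrable_graphop_of_mult[OF _ Linf_const[of 1]] by simp

lemma represents_graphop_of: "represents M graphop_of N"
  unfolding represents_def op_form_def using integral_graphop_of_mult by blast

lemma AE_eq_graphop_ofI:
  assumes "integrable M f" "v \<in> Linf M"
    and "\<And>T. T \<in> sets M \<Longrightarrow> (\<integral>x. f x * indicator T x \<partial>M) = (\<integral>p. v (fst p) * indicator T (snd p) \<partial>N)"
  shows "AE x in M. f x = graphop_of v x"
  using assms by (intro AE_eq_if_indicator_integrals_eq integrable_graphop_of)
    (simp_all add: integral_graphop_of_mult Linf_indicator)

lemma graphop_of_cong_AE:
  assumes "v \<in> Linf M" "w \<in> Linf M" "AE x in M. v x = w x"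
  shows "graphop_of v = graphop_of w"
proof -
  have [measurable]: "v \<in> borel_measurable M" "w \<in> borel_measurable M"
    using assms(1,2) by (auto elim: LinfE)
  have "weighted_marginal (\<lambda>x. max 0 (v x)) = weighted_marginal (\<lambda>x. max 0 (w x))"
    "weighted_marginal (\<lambda>x. max 0 (- v x)) = weighted_marginal (\<lambda>x. max 0 (- w x))"
    using assms(3) by (auto intro!: weighted_marginal_cong_AE elim: AE_mp)
  then show ?thesis by (simp add: graphop_of_def fun_eq_iff)
qed

lemma AE_graphop_of_lincomb:
  assumes v: "v \<in> Linf M" and w: "w \<in> Linf M"
  shows "AE x in M. graphop_of (\<lambda>y. a * v y + b * w y) x = a * graphop_of v x + b * graphop_of w x"
proof -
  have "AE x in M. a * graphop_of v x + b * graphop_of w x = graphop_of (\<lambda>y. a * v y + b * w y) x"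
  proof (rule AE_eq_graphop_ofI[OF _ Linf_lincomb[OF v w]])
    show "integrable M (\<lambda>x. a * graphop_of v x + b * graphop_of w x)"
      using integrable_graphop_of[OF v] integrable_graphop_of[OF w] by auto
    fix T assume T: "T \<in> sets M"
    note iv = integrable_graphop_of_mult[OF v Linf_indicator[OF T]] integrable_Linf_fst_snd[OF v Linf_indicator[OF T]]
    note iw = integrable_graphop_of_mult[OF w Linf_indicator[OF T]] integrable_Linf_fst_snd[OF w Linf_indicator[OF T]]
    have "(\<integral>x. (a * graphop_of v x + b * graphop_of w x) * indicator T x \<partial>M)
        = a * (\<integral>x. graphop_of v x * indicator T x \<partial>M) + b * (\<integral>x. graphop_of w x * indicator T x \<partial>M)"
      using iv iw by (simp add: distrib_right mult.assoc)
    also have "\<dots> = a * (\<integral>p. v (fst p) * indicator T (snd p) \<partial>N) + b * (\<integral>p. w (fst p) * indicator T (snd p) \<partial>N)"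
      using v w T by (simp add: integral_graphop_of_mult Linf_indicator)
    also have "\<dots> = (\<integral>p. (a * v (fst p) + b * w (fst p)) * indicator T (snd p) \<partial>N)"
      using iv iw by (simp add: distrib_right mult.assoc)
    finally show "(\<integral>x. (a * graphop_of v x + b * graphop_of w x) * indicator T x \<partial>M)
        = (\<integral>p. (a * v (fst p) + b * w (fst p)) * indicator T (snd p) \<partial>N)" .
  qed
  then show ?thesis by (auto elim: AE_mp)
qed

lemma integral_abs_graphop_of_le:
  assumes v: "v \<in> Linf M"
  shows "(\<integral>x. \<bar>graphop_of v x\<bar> \<partial>M) \<le> measure N (space N) * linf_norm M v"
proof -
  define s where "s y = sgn (graphop_of v y)" for y
  have "s \<in> borel_measurable M"
    unfolding s_def using borel_measurable_integrable[OF integrable_graphop_of[OF v]] by measurable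
  then have s: "s \<in> Linf M" by (rule LinfI[where c=1]) (auto simp: s_def sgn_real_def)
  have "AE p in N. v (fst p) * s (snd p) \<le> linf_norm M v"
    using AE_fst[OF AE_abs_le_linf_norm[OF v]]
  proof eventually_elim
    case (elim p)
    have "v (fst p) * s (snd p) \<le> \<bar>v (fst p)\<bar> * \<bar>s (snd p)\<bar>" by (metis abs_ge_self abs_mult)
    also have "\<dots> \<le> \<bar>v (fst p)\<bar>" by (intro mult_right_le_one_le) (auto simp: s_def sgn_real_def)
    finally show ?case using elim by simp
  qed
  then have "(\<integral>p. v (fst p) * s (snd p) \<partial>N) \<le> (\<integral>p. linf_norm M v \<partial>N)"
    by (intro integral_mono_AE integrable_Linf_fst_snd v s) auto
  moreover have "(\<integral>x. \<bar>graphop_of v x\<bar> \<partial>M) = (\<integral>x. graphop_of v x * s x \<partial>M)"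
    by (rule Bochner_Integration.integral_cong) (auto simp: s_def sgn_real_def)
  ultimately show ?thesis
    using integral_graphop_of_mult[OF v s] by simp
qed

lemma P_operator_graphop_of: "P_operator M graphop_of"
  unfolding P_operator_def
proof (intro conjI ballI allI impI exI)
  fix v assume "v \<in> Linf M"
  then show "integrable M (graphop_of v)" by (rule integrable_graphop_of)
  show "(\<integral>x. \<bar>graphop_of v x\<bar> \<partial>M) \<le> measure N (space N) * linf_norm M v"
    using \<open>v \<in> Linf M\<close> by (rule integral_abs_graphop_of_le)
next
  fix v w assume "v \<in> Linf M" "w \<in> Linf M"
  then show "AE x in M. graphop_of (\<lambda>y. a * v y + b * w y) x = a * graphop_of v x + b * graphop_of w x"
    for a b by (rule AE_graphop_of_lincomb)
  assume "AE x in M. v x = w x"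
  with \<open>v \<in> Linf M\<close> \<open>w \<in> Linf M\<close> have "graphop_of v = graphop_of w" by (rule graphop_of_cong_AE)
  then show "AE x in M. graphop_of v x = graphop_of w x" by simp
qed

lemma self_adjoint_graphop_of: "self_adjoint_op M graphop_of"
  unfolding self_adjoint_op_def op_form_def
proof (intro ballI)
  fix v w assume v: "v \<in> Linf M" and w: "w \<in> Linf M"
  have [measurable]: "v \<in> borel_measurable M" "w \<in> borel_measurable M"
    using v w by (auto elim: LinfE)
  have "(\<integral>p. v (fst p) * w (snd p) \<partial>N) = (\<integral>p. w (fst p) * v (snd p) \<partial>N)"
    using integral_swap[of "\<lambda>p. w (fst p) * v (snd p)"] by (simp add: mult.commute)
  then show "(\<integral>x. graphop_of v x * w x \<partial>M) = (\<integral>x. graphop_of w x * v x \<partial>M)"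
    using v w by (simp add: integral_graphop_of_mult)
qed

lemma positivity_preserving_graphop_of: "positivity_preserving M graphop_of"
  unfolding positivity_preserving_def
proof (intro ballI impI)
  fix v assume v: "v \<in> Linf M" and "AE x in M. 0 \<le> v x"
  from AE_fst[OF this(2)] have nonneg: "AE p in N. 0 \<le> v (fst p)" .
  show "AE x in M. 0 \<le> graphop_of v x"
  proof (rule AE_nonneg_if_indicator_integrals_nonneg[OF integrable_graphop_of[OF v]])
    fix T assume "T \<in> sets M"
    then show "0 \<le> (\<integral>x. graphop_of v x * indicator T x \<partial>M)"
      using v nonneg by (auto simp: integral_graphop_of_mult Linf_indicator intro!: integral_nonneg_AE elim: AE_mp)
  qed
qed

lemma graphop_graphop_of: "graphop M graphop_of"
  using P_operator_graphop_of self_adjoint_graphop_of positivity_preserving_graphop_of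
  by (simp add: graphop_def)

lemma integral_indicator_fst_snd:
  assumes "S \<in> sets M" "T \<in> sets M"
  shows "(\<integral>p. indicator S (fst p) * indicator T (snd p) \<partial>N) = measure N (S \<times> T)"
proof -
  have "S \<times> T \<in> sets N" using assms by (simp add: sets_N)
  moreover have "(\<lambda>p. indicator S (fst p) * indicator T (snd p) :: real) = indicator (S \<times> T)"
    by (auto simp: indicator_def)
  ultimately show ?thesis by simp
qed

lemma emeasure_Times_eq_op_form:
  assumes "represents M A N" "S \<in> sets M" "T \<in> sets M"
  shows "emeasure N (S \<times> T) = ennreal (op_form M A (indicator S) (indicator T))"
  using assms N.emeasure_eq_measure integral_indicator_fst_snd[OF assms(2,3)]
  by (simp add: represents_def Linf_indicator)

lemma represents_if_rectangles:
  assumes A: "graphop M A"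
    and rect: "\<And>S T. S \<in> sets M \<Longrightarrow> T \<in> sets M \<Longrightarrow>
      op_form M A (indicator S) (indicator T) = measure N (S \<times> T)"
  shows "represents M A N"
  unfolding represents_def
proof (intro ballI)
  fix f g assume f: "f \<in> Linf M" and g: "g \<in> Linf M"
  have "AE x in M. A f x = graphop_of f x"
  proof (rule self_adjoint_op_AE_eq[OF _ _ P_operator_graphop_of self_adjoint_graphop_of _ f])
    show "P_operator M A" "self_adjoint_op M A" using A by (simp_all add: graphop_def)
    fix S T assume "S \<in> sets M" "T \<in> sets M"
    then show "op_form M A (indicator S) (indicator T) = op_form M graphop_of (indicator S) (indicator T)"
      using represents_graphop_of by (simp add: rect represents_def integral_indicator_fst_snd Linf_indicator)
  qed
  then have "op_form M A f g = op_form M graphop_of f g"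
    using A f g by (intro op_form_AE_cong integrable_graphop_of P_operator_integrable) (simp_all add: graphop_def)
  then show "op_form M A f g = (\<integral>p. f (fst p) * g (snd p) \<partial>N)"
    using represents_graphop_of f g by (simp add: represents_def)
qed

end

section \<open>The measure of a graphop\<close>

lemma represents_measure_unique:
  assumes "prob_space M" and N1: "admissible_measure M N1" "represents M A N1"
    and N2: "admissible_measure M N2" "represents M A N2"
  shows "N1 = N2"
proof -
  interpret N1: edge_measure M N1 using assms by (simp add: edge_measure_def edge_measure_axioms_def)
  interpret N2: edge_measure M N2 using assms by (simp add: edge_measure_def edge_measure_axioms_def)
  show ?thesis
    using N1 N2 by (intro measure_eqI_rectangles[OF N1.sets_N N2.sets_N N1.finite_measure_N])
      (simp add: N1.emeasure_Times_eq_op_form N2.emeasure_Times_eq_op_form)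
qed

locale graphop_on = prob_space M for M :: "'a measure" +
  fixes A :: "('a \<Rightarrow> real) \<Rightarrow> 'a \<Rightarrow> real"
  assumes graphop: "graphop M A"
begin

lemma P_operator_A: "P_operator M A"
  using graphop by (simp add: graphop_def)

lemma integrable_A: "v \<in> Linf M \<Longrightarrow> integrable M (A v)"
  using P_operator_A by (rule P_operator_integrable)

lemma AE_A_nonneg: "v \<in> Linf M \<Longrightarrow> AE x in M. 0 \<le> v x \<Longrightarrow> AE x in M. 0 \<le> A v x"
  using graphop by (simp add: graphop_def positivity_preserving_def)

definition rect_mass :: "'a set \<Rightarrow> 'a set \<Rightarrow> real" where
  "rect_mass S T = op_form M A (indicator S) (indicator T)"

lemma rect_mass_nonneg:
  assumes "S \<in> sets M"
  shows "0 \<le> rect_mass S T"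
  using AE_A_nonneg[OF Linf_indicator[OF assms]] unfolding rect_mass_def op_form_def
  by (intro integral_nonneg_AE) (auto elim: AE_mp)

lemma rect_mass_commute: "S \<in> sets M \<Longrightarrow> T \<in> sets M \<Longrightarrow> rect_mass S T = rect_mass T S"
  using graphop by (simp add: rect_mass_def graphop_def self_adjoint_op_def Linf_indicator)

lemma rect_mass_empty_right: "rect_mass S {} = 0"
  by (simp add: rect_mass_def op_form_def)

text \<open>For fixed \<open>y\<close>, the section in \<open>x\<close> is the nonnegative function \<open>\<Sum>\<^sub>i\<^sub>\<in>\<^sub>J c\<^sub>i 1\<^sub>S\<^sub>i\<close>
  with \<open>J = {i. y \<in> T\<^sub>i}\<close>, to which positivity of \<open>A\<close> applies; since only finitely many \<open>J\<close>
  occur, the exceptional null sets can be collected.\<close>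

lemma AE_rect_sum_nonneg:
  fixes c :: "'i \<Rightarrow> real"
  assumes I: "finite I" and S: "\<And>i. i \<in> I \<Longrightarrow> S i \<in> sets M"
    and nonneg: "\<And>x y. x \<in> space M \<Longrightarrow> y \<in> space M \<Longrightarrow>
      0 \<le> (\<Sum>i\<in>I. c i * indicator (S i \<times> T i) (x, y))"
  shows "AE y in M. 0 \<le> (\<Sum>i\<in>I. c i * (A (indicator (S i)) y * indicator (T i) y))"
proof -
  define h where "h J x = (\<Sum>i\<in>J. c i * indicator (S i) x)" for J x
  define J where "J y = {i \<in> I. y \<in> T i}" for y
  have h: "h J' \<in> Linf M" if "J' \<in> Pow I" for J'
    using that finite_subset[OF _ I] S unfolding h_def by (intro Linf_sum Linf_indicator) auto
  have h_J: "h (J y) x = (\<Sum>i\<in>I. c i * indicator (S i \<times> T i) (x, y))" for x y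
    unfolding h_def J_def using I by (intro sum.mono_neutral_cong_left) (auto simp: indicator_def)
  have "AE y in M. \<forall>J'\<in>Pow I. A (h J') y = (\<Sum>i\<in>J'. c i * A (indicator (S i)) y)
      \<and> (J' \<in> J ` space M \<longrightarrow> 0 \<le> A (h J') y)"
  proof (rule AE_finite_allI)
    fix J' assume J': "J' \<in> Pow I"
    have "AE y in M. A (h J') y = (\<Sum>i\<in>J'. c i * A (indicator (S i)) y)"
      using J' finite_subset[OF _ I] S unfolding h_def by (intro P_operator_sum[OF P_operator_A] Linf_indicator) auto
    moreover have "AE y in M. 0 \<le> A (h J') y" if "J' \<in> J ` space M"
      using that h[OF J'] nonneg by (intro AE_A_nonneg) (auto simp: h_J)
    ultimately show "AE y in M. A (h J') y = (\<Sum>i\<in>J'. c i * A (indicator (S i)) y)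
      \<and> (J' \<in> J ` space M \<longrightarrow> 0 \<le> A (h J') y)"
      by (cases "J' \<in> J ` space M") (auto elim: AE_mp)
  qed (use I in simp)
  then show ?thesis
  proof (rule AE_mp, intro AE_I2 impI)
    fix y assume "y \<in> space M" and "\<forall>J'\<in>Pow I. A (h J') y = (\<Sum>i\<in>J'. c i * A (indicator (S i)) y)
      \<and> (J' \<in> J ` space M \<longrightarrow> 0 \<le> A (h J') y)"
    moreover have "J y \<in> Pow I" "J y \<in> J ` space M"
      using \<open>y \<in> space M\<close> by (auto simp: J_def)
    ultimately have "0 \<le> (\<Sum>i\<in>J y. c i * A (indicator (S i)) y)" by metis
    also have "\<dots> = (\<Sum>i\<in>I. c i * (A (indicator (S i)) y * indicator (T i) y))"
      unfolding J_def using I by (intro sum.mono_neutral_cong_left) (auto simp: indicator_def)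
    finally show "0 \<le> (\<Sum>i\<in>I. c i * (A (indicator (S i)) y * indicator (T i) y))" .
  qed
qed

lemma rect_mass_sum_nonneg:
  fixes c :: "'i \<Rightarrow> real"
  assumes I: "finite I" and S: "\<And>i. i \<in> I \<Longrightarrow> S i \<in> sets M" and T: "\<And>i. i \<in> I \<Longrightarrow> T i \<in> sets M"
    and nonneg: "\<And>x y. x \<in> space M \<Longrightarrow> y \<in> space M \<Longrightarrow>
      0 \<le> (\<Sum>i\<in>I. c i * indicator (S i \<times> T i) (x, y))"
  shows "0 \<le> (\<Sum>i\<in>I. c i * rect_mass (S i) (T i))"
proof -
  have "(\<Sum>i\<in>I. c i * rect_mass (S i) (T i)) = (\<integral>y. (\<Sum>i\<in>I. c i * (A (indicator (S i)) y * indicator (T i) y)) \<partial>M)"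
    using S T by (simp add: rect_mass_def op_form_def integrable_real_mult_indicator integrable_A Linf_indicator)
  also have "0 \<le> \<dots>"
    by (rule integral_nonneg_AE[OF AE_rect_sum_nonneg[OF I S nonneg]])
  finally show ?thesis .
qed

lemma rect_mass_sum_mono:
  fixes c :: "'i \<Rightarrow> real" and d :: "'j \<Rightarrow> real"
  assumes I: "finite I" and J: "finite J"
    and S: "\<And>i. i \<in> I \<Longrightarrow> S i \<in> sets M" and T: "\<And>i. i \<in> I \<Longrightarrow> T i \<in> sets M"
    and S': "\<And>j. j \<in> J \<Longrightarrow> S' j \<in> sets M" and T': "\<And>j. j \<in> J \<Longrightarrow> T' j \<in> sets M"
    and le: "\<And>x y. x \<in> space M \<Longrightarrow> y \<in> space M \<Longrightarrow>
      (\<Sum>i\<in>I. c i * indicator (S i \<times> T i) (x, y)) \<le> (\<Sum>j\<in>J. d j * indicator (S' j \<times> T' j) (x, y))"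
  shows "(\<Sum>i\<in>I. c i * rect_mass (S i) (T i)) \<le> (\<Sum>j\<in>J. d j * rect_mass (S' j) (T' j))"
proof -
  define e where "e = case_sum (\<lambda>i. - c i) d"
  define SS where "SS = case_sum S S'"
  define TT where "TT = case_sum T T'"
  have sum_Plus: "(\<Sum>k\<in>I <+> J. e k * f (SS k) (TT k)) =
      (\<Sum>j\<in>J. d j * f (S' j) (T' j)) - (\<Sum>i\<in>I. c i * f (S i) (T i))" for f :: "'a set \<Rightarrow> 'a set \<Rightarrow> real"
    by (simp add: sum.Plus[OF I J] e_def SS_def TT_def sum_negf)
  have "0 \<le> (\<Sum>k\<in>I <+> J. e k * rect_mass (SS k) (TT k))"
  proof (rule rect_mass_sum_nonneg)
    show "SS k \<in> sets M" "TT k \<in> sets M" if "k \<in> I <+> J" for k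
      using that S T S' T' by (auto simp: SS_def TT_def)
    fix x y assume "x \<in> space M" "y \<in> space M"
    then show "0 \<le> (\<Sum>k\<in>I <+> J. e k * indicator (SS k \<times> TT k) (x, y))"
      using le sum_Plus[of "\<lambda>S T. indicator (S \<times> T) (x, y)"] by simp
  qed (use I J in simp)
  then show ?thesis by (simp add: sum_Plus)
qed

lemma rect_mass_le_sum_cover:
  assumes F: "finite F" and K: "K \<in> sets M" "L \<in> sets M"
    and U: "\<And>n. n \<in> F \<Longrightarrow> U n \<in> sets M" "\<And>n. n \<in> F \<Longrightarrow> V n \<in> sets M"
    and cover: "K \<times> L \<subseteq> (\<Union>n\<in>F. U n \<times> V n)"
  shows "rect_mass K L \<le> (\<Sum>n\<in>F. rect_mass (U n) (V n))"
proof -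
  have "(\<Sum>i\<in>{()}. 1 * rect_mass K L) \<le> (\<Sum>n\<in>F. 1 * rect_mass (U n) (V n))"
  proof (rule rect_mass_sum_mono)
    fix x y
    show "(\<Sum>i\<in>{()}. 1 * indicator (K \<times> L) (x, y)) \<le> (\<Sum>n\<in>F. 1 * indicator (U n \<times> V n) (x, y) :: real)"
    proof (cases "(x, y) \<in> K \<times> L")
      case True
      then obtain n where "n \<in> F" "(x, y) \<in> U n \<times> V n" using cover by blast
      then have "indicator (U n \<times> V n) (x, y) \<le> (\<Sum>n\<in>F. indicator (U n \<times> V n) (x, y) :: real)"
        using F by (intro member_le_sum) auto
      with True \<open>(x, y) \<in> U n \<times> V n\<close> show ?thesis by simp
    qed (simp add: sum_nonneg)
  qed (use assms in auto)
  then show ?thesis by simp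
qed

lemma rect_mass_sum_le_disjoint:
  assumes F: "finite F" and ST: "S \<in> sets M" "T \<in> sets M"
    and Sn: "\<And>n. n \<in> F \<Longrightarrow> Sn n \<in> sets M" "\<And>n. n \<in> F \<Longrightarrow> Tn n \<in> sets M"
    and disj: "disjoint_family_on (\<lambda>n. Sn n \<times> Tn n) F" and sub: "(\<Union>n\<in>F. Sn n \<times> Tn n) \<subseteq> S \<times> T"
  shows "(\<Sum>n\<in>F. rect_mass (Sn n) (Tn n)) \<le> rect_mass S T"
proof -
  have "(\<Sum>n\<in>F. 1 * rect_mass (Sn n) (Tn n)) \<le> (\<Sum>i\<in>{()}. 1 * rect_mass S T)"
  proof (rule rect_mass_sum_mono)
    fix x y
    have "(\<Sum>n\<in>F. indicator (Sn n \<times> Tn n) (x, y)) = (indicator (\<Union>n\<in>F. Sn n \<times> Tn n) (x, y) :: real)"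
      by (rule indicator_UN_disjoint[OF F disj, symmetric])
    also have "\<dots> \<le> indicator (S \<times> T) (x, y)"
      using sub by (auto simp: indicator_def)
    finally show "(\<Sum>n\<in>F. 1 * indicator (Sn n \<times> Tn n) (x, y)) \<le> (\<Sum>i\<in>{()}. 1 * indicator (S \<times> T) (x, y) :: real)"
      by simp
  qed (use assms in auto)
  then show ?thesis by simp
qed

lemma rect_mass_le_enlarge:
  assumes "S \<in> sets M" "T \<in> sets M" "U \<in> sets M" "V \<in> sets M" "S \<subseteq> U" "T \<subseteq> V"
  shows "rect_mass U V \<le> rect_mass S T + rect_mass (space M) (U - S) + rect_mass (space M) (V - T)"
proof -
  define U' where "U' n = (if n = (0::nat) then S else if n = 1 then U - S else space M)" for n
  define V' where "V' n = (if n = (0::nat) then T else if n = 1 then space M else V - T)" for n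
  have "U \<times> V \<subseteq> (\<Union>n\<in>{0, 1, 2}. U' n \<times> V' n)"
    using assms(5,6) sets.sets_into_space[OF assms(3)] sets.sets_into_space[OF assms(4)]
    by (auto simp: U'_def V'_def)
  then have "rect_mass U V \<le> (\<Sum>n\<in>{0, 1, 2}. rect_mass (U' n) (V' n))"
    using assms by (intro rect_mass_le_sum_cover) (auto simp: U'_def V'_def)
  then show ?thesis
    using rect_mass_commute[of "U - S" "space M"] assms by (simp add: U'_def V'_def)
qed

definition degree_measure :: "'a measure" where
  "degree_measure = density M (\<lambda>x. ennreal (A (indicator (space M)) x))"

lemma sets_degree_measure [simp]: "sets degree_measure = sets M"
  by (simp add: degree_measure_def)

lemma emeasure_degree_measure:
  assumes "E \<in> sets M"
  shows "emeasure degree_measure E = ennreal (rect_mass (space M) E)"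
proof -
  have i: "integrable M (A (indicator (space M)))" and nonneg: "AE x in M. 0 \<le> A (indicator (space M)) x"
    using integrable_A AE_A_nonneg by (auto simp: Linf_indicator)
  have "emeasure degree_measure E = (\<integral>\<^sup>+x. ennreal (A (indicator (space M)) x * indicator E x) \<partial>M)"
    using assms borel_measurable_integrable[OF i] unfolding degree_measure_def
    by (subst emeasure_density) (auto intro!: nn_integral_cong simp: indicator_def)
  also have "\<dots> = ennreal (rect_mass (space M) E)"
    using i nonneg assms unfolding rect_mass_def op_form_def
    by (intro nn_integral_eq_integral integrable_real_mult_indicator) (auto elim: AE_mp)
  finally show ?thesis .
qed

lemma finite_measure_degree_measure: "finite_measure degree_measure"
  by (rule finite_measureI) (simp add: emeasure_degree_measure sets_eq_imp_space_eq[OF sets_degree_measure])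

lemma measure_degree_measure: "E \<in> sets M \<Longrightarrow> measure degree_measure E = rect_mass (space M) E"
  using emeasure_degree_measure rect_mass_nonneg[OF sets.top] by (simp add: measure_def)

end

locale polish_graphop = graphop_on M A for M :: "'a::polish_space measure" and A +
  assumes sets_M: "sets M = sets borel"
begin

lemma sets_degree_measure_borel: "sets degree_measure = sets borel"
  by (simp add: sets_M)

lemma exists_open_rect_approx:
  assumes S: "S \<in> sets M" and T: "T \<in> sets M" and "0 < e"
  obtains U V where "open U" "open V" "S \<subseteq> U" "T \<subseteq> V" "rect_mass U V < rect_mass S T + e"
proof -
  have borel: "S \<in> sets borel" "T \<in> sets borel" using S T by (simp_all add: sets_M)
  have e2: "0 < e / 2" using \<open>0 < e\<close> by simp
  obtain U where U: "open U" "S \<subseteq> U" "measure degree_measure (U - S) < e / 2"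
    by (rule finite_borel_measure_outer_open[OF sets_degree_measure_borel finite_measure_degree_measure borel(1) e2])
  obtain V where V: "open V" "T \<subseteq> V" "measure degree_measure (V - T) < e / 2"
    by (rule finite_borel_measure_outer_open[OF sets_degree_measure_borel finite_measure_degree_measure borel(2) e2])
  have UV: "U \<in> sets M" "V \<in> sets M" using U(1) V(1) by (simp_all add: sets_M borel_open)
  have "rect_mass U V \<le> rect_mass S T + rect_mass (space M) (U - S) + rect_mass (space M) (V - T)"
    using S T UV U(2) V(2) by (intro rect_mass_le_enlarge)
  also have "\<dots> < rect_mass S T + e"
    using U(3) V(3) measure_degree_measure[OF sets.Diff[OF UV(1) S]] measure_degree_measure[OF sets.Diff[OF UV(2) T]]
    by simp
  finally show ?thesis using U V that by blast
qed

lemma exists_compact_rect_approx: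
  assumes S: "S \<in> sets M" and T: "T \<in> sets M" and "0 < e"
  obtains K L where "compact K" "compact L" "K \<subseteq> S" "L \<subseteq> T" "rect_mass S T < rect_mass K L + e"
proof -
  have borel: "S \<in> sets borel" "T \<in> sets borel" using S T by (simp_all add: sets_M)
  have e2: "0 < e / 2" using \<open>0 < e\<close> by simp
  obtain K where K: "compact K" "K \<subseteq> S" "measure degree_measure (S - K) < e / 2"
    by (rule finite_borel_measure_inner_compact[OF sets_degree_measure_borel finite_measure_degree_measure borel(1) e2])
  obtain L where L: "compact L" "L \<subseteq> T" "measure degree_measure (T - L) < e / 2"
    by (rule finite_borel_measure_inner_compact[OF sets_degree_measure_borel finite_measure_degree_measure borel(2) e2])
  have KL: "K \<in> sets M" "L \<in> sets M"
    using K(1) L(1) by (simp_all add: sets_M compact_imp_closed borel_closed)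
  have "rect_mass S T \<le> rect_mass K L + rect_mass (space M) (S - K) + rect_mass (space M) (T - L)"
    using S T KL K(2) L(2) by (intro rect_mass_le_enlarge)
  also have "\<dots> < rect_mass K L + e"
    using K(3) L(3) measure_degree_measure[OF sets.Diff[OF S KL(1)]] measure_degree_measure[OF sets.Diff[OF T KL(2)]]
    by simp
  finally show ?thesis using K L that by blast
qed

lemma rect_mass_le_suminf:
  assumes S: "S \<in> sets M" "T \<in> sets M" and Sn: "\<And>n. Sn n \<in> sets M" "\<And>n. Tn n \<in> sets M"
    and cover: "S \<times> T \<subseteq> (\<Union>n. Sn n \<times> Tn n)" and summable: "summable (\<lambda>n. rect_mass (Sn n) (Tn n))"
  shows "rect_mass S T \<le> (\<Sum>n. rect_mass (Sn n) (Tn n))"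
proof (rule field_le_epsilon)
  fix e :: real assume "0 < e"
  define b where "b n = e / 2 * (1 / 2) ^ Suc n" for n
  have b: "0 < b n" for n using \<open>0 < e\<close> by (simp add: b_def)
  have b_sums: "b sums (e / 2)" unfolding b_def using sums_mult[OF power_half_series, of "e / 2"] by simp
  have sum_b: "(\<Sum>n<k. b n) \<le> e / 2" for k
    using sum_le_suminf[OF sums_summable[OF b_sums], of "{..<k}"] b sums_unique[OF b_sums]
    by (auto intro: less_imp_le)
  have "0 < e / 2" using \<open>0 < e\<close> by simp
  then obtain K L where KL: "compact K" "compact L" "K \<subseteq> S" "L \<subseteq> T" "rect_mass S T < rect_mass K L + e / 2"
    by (rule exists_compact_rect_approx[OF S])
  have "\<exists>U V. open U \<and> open V \<and> Sn n \<subseteq> U \<and> Tn n \<subseteq> V \<and>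
      rect_mass U V < rect_mass (Sn n) (Tn n) + b n" for n
    by (rule exists_open_rect_approx[OF Sn b]) blast
  then obtain U V where "\<forall>n. open (U n) \<and> open (V n) \<and> Sn n \<subseteq> U n \<and> Tn n \<subseteq> V n \<and>
      rect_mass (U n) (V n) < rect_mass (Sn n) (Tn n) + b n"
    by metis
  then have UV: "\<And>n. open (U n)" "\<And>n. open (V n)" "\<And>n. Sn n \<subseteq> U n" "\<And>n. Tn n \<subseteq> V n"
    "\<And>n. rect_mass (U n) (V n) < rect_mass (Sn n) (Tn n) + b n"
    by auto
  have "K \<times> L \<subseteq> S \<times> T" using KL(3,4) by blast
  also have "\<dots> \<subseteq> (\<Union>n. Sn n \<times> Tn n)" by (rule cover)
  also have "\<dots> \<subseteq> (\<Union>n. U n \<times> V n)" using UV(3,4) by (intro UN_mono Sigma_mono) auto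
  finally obtain k where k: "K \<times> L \<subseteq> (\<Union>n<k. U n \<times> V n)"
    by (rule compact_Times_subset_finite_Union[OF KL(1,2) UV(1,2)])
  have "rect_mass K L \<le> (\<Sum>n<k. rect_mass (U n) (V n))"
  proof (rule rect_mass_le_sum_cover[OF _ _ _ _ _ k])
    show "K \<in> sets M" "L \<in> sets M" using KL(1,2) by (simp_all add: sets_M compact_imp_closed borel_closed)
    show "U n \<in> sets M" "V n \<in> sets M" for n using UV(1,2) by (simp_all add: sets_M borel_open)
  qed simp
  also have "\<dots> \<le> (\<Sum>n<k. rect_mass (Sn n) (Tn n) + b n)"
    using UV(5) by (intro sum_mono less_imp_le)
  also have "\<dots> = (\<Sum>n<k. rect_mass (Sn n) (Tn n)) + (\<Sum>n<k. b n)"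
    by (rule sum.distrib)
  also have "\<dots> \<le> (\<Sum>n. rect_mass (Sn n) (Tn n)) + e / 2"
    using Sn(1) by (intro add_mono[OF sum_le_suminf[OF summable] sum_b]) (simp_all add: rect_mass_nonneg)
  finally show "rect_mass S T \<le> (\<Sum>n. rect_mass (Sn n) (Tn n)) + e" using KL(5) by linarith
qed

lemma rect_mass_sums:
  assumes S: "S \<in> sets M" "T \<in> sets M" and Sn: "\<And>n. Sn n \<in> sets M" "\<And>n. Tn n \<in> sets M"
    and disj: "disjoint_family (\<lambda>n. Sn n \<times> Tn n)" and eq: "(\<Union>n. Sn n \<times> Tn n) = S \<times> T"
  shows "(\<lambda>n. rect_mass (Sn n) (Tn n)) sums rect_mass S T"
proof -
  have partial: "(\<Sum>n<k. rect_mass (Sn n) (Tn n)) \<le> rect_mass S T" for k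
  proof (rule rect_mass_sum_le_disjoint[OF _ S Sn])
    show "disjoint_family_on (\<lambda>n. Sn n \<times> Tn n) {..<k}" using disj by (rule disjoint_family_on_mono[rotated]) simp
    show "(\<Union>n\<in>{..<k}. Sn n \<times> Tn n) \<subseteq> S \<times> T" using eq by blast
  qed simp
  have summable: "summable (\<lambda>n. rect_mass (Sn n) (Tn n))"
    using partial Sn by (intro summableI_nonneg_bounded rect_mass_nonneg)
  have "(\<Sum>n. rect_mass (Sn n) (Tn n)) = rect_mass S T"
    using suminf_le_const[OF summable partial] rect_mass_le_suminf[OF S Sn _ summable] eq by simp
  then show ?thesis using summable_sums[OF summable] by simp
qed

lemma rect_mass_null_right:
  assumes "S \<in> null_sets M"
  shows "rect_mass T S = 0"
proof -
  have "AE x in M. A (indicator T) x * indicator S x = 0"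
    using AE_not_in[OF assms] by eventually_elim simp
  then show ?thesis by (simp add: rect_mass_def op_form_def integral_eq_zero_AE)
qed

definition measure_of_graphop :: "('a \<times> 'a) measure" where
  "measure_of_graphop = extend_measure (space M \<times> space M) {(S, T). S \<in> sets M \<and> T \<in> sets M}
     (\<lambda>(S, T). S \<times> T) (\<lambda>(S, T). ennreal (rect_mass S T))"

lemma sets_measure_of_graphop: "sets measure_of_graphop = sets (M \<Otimes>\<^sub>M M)"
proof -
  have "(\<lambda>(S, T). S \<times> T) ` {(S, T). S \<in> sets M \<and> T \<in> sets M} = {S \<times> T |S T. S \<in> sets M \<and> T \<in> sets M}"
    by auto
  moreover have "{S \<times> T |S T. S \<in> sets M \<and> T \<in> sets M} \<subseteq> Pow (space M \<times> space M)"
    by (auto dest: sets.sets_into_space)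
  ultimately show ?thesis
    by (simp add: measure_of_graphop_def sets_extend_measure sets_pair_measure)
qed

lemma emeasure_measure_of_graphop_Times:
  assumes "S \<in> sets M" "T \<in> sets M"
  shows "emeasure measure_of_graphop (S \<times> T) = ennreal (rect_mass S T)"
proof (rule extend_measure_caratheodory_pair[where P="\<lambda>S T. S \<in> sets M \<and> T \<in> sets M"
      and G="\<lambda>S T. S \<times> T" and \<mu>="\<lambda>S T. ennreal (rect_mass S T)", OF measure_of_graphop_def])
  show "S \<in> sets M \<and> T \<in> sets M" using assms ..
  show "semiring_of_sets (space M \<times> space M) {S \<times> T |S T. S \<in> sets M \<and> T \<in> sets M}"
    by (rule semiring_of_sets_rectangles)
  show empty: "ennreal (rect_mass S' T') = 0" if "S' \<in> sets M \<and> T' \<in> sets M" "S' \<times> T' = {}" for S' T'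
    using that rect_mass_commute[of "{}" T'] by (auto simp: rect_mass_empty_right)
  show "ennreal (rect_mass S' T') = ennreal (rect_mass S'' T'')"
    if "S' \<in> sets M \<and> T' \<in> sets M" "S'' \<in> sets M \<and> T'' \<in> sets M" "S' \<times> T' = S'' \<times> T''" for S' T' S'' T''
  proof (cases "S' \<times> T' = {}")
    case True
    then show ?thesis using empty[OF that(1) True] empty[OF that(2)] that(3) by simp
  next
    case False
    then show ?thesis using that(3) by (auto simp: times_eq_iff)
  qed
  show "(\<Sum>n. ennreal (rect_mass (Sn n) (Tn n))) = ennreal (rect_mass S' T')"
    if "\<And>n. Sn n \<in> sets M \<and> Tn n \<in> sets M" "S' \<in> sets M \<and> T' \<in> sets M"
      "disjoint_family (\<lambda>n. Sn n \<times> Tn n)" "(\<Union>n. Sn n \<times> Tn n) = S' \<times> T'" for Sn Tn S' T'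
  proof -
    have "(\<lambda>n. rect_mass (Sn n) (Tn n)) sums rect_mass S' T'"
      using that by (intro rect_mass_sums) auto
    then show ?thesis
      using that(1) by (simp add: suminf_ennreal2 sums_iff rect_mass_nonneg)
  qed
qed simp

lemma admissible_measure_of_graphop: "admissible_measure M measure_of_graphop"
  unfolding admissible_measure_def
proof (intro conjI)
  show sets: "sets measure_of_graphop = sets (M \<Otimes>\<^sub>M M)" by (rule sets_measure_of_graphop)
  have space: "space measure_of_graphop = space M \<times> space M"
    using sets_eq_imp_space_eq[OF sets] by (simp add: space_pair_measure)
  show "finite_measure measure_of_graphop"
    by (rule finite_measureI) (simp add: space emeasure_measure_of_graphop_Times)
  show "symmetric_measure M measure_of_graphop"
    by (simp add: symmetric_measure_def emeasure_measure_of_graphop_Times rect_mass_commute)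
  show "marginal_ac M measure_of_graphop"
    unfolding marginal_ac_def absolutely_continuous_def
  proof
    fix S assume S: "S \<in> null_sets M"
    then have "S \<in> sets M" by auto
    moreover have "fst -` S \<inter> space measure_of_graphop = S \<times> space M"
      using sets.sets_into_space[OF \<open>S \<in> sets M\<close>] by (auto simp: space)
    moreover have "fst \<in> measure_of_graphop \<rightarrow>\<^sub>M M"
      using measurable_fst[of M M] by (simp add: measurable_cong_sets[OF sets refl])
    ultimately show "S \<in> null_sets (distr measure_of_graphop M fst)"
      using rect_mass_null_right[OF S] rect_mass_commute[of S "space M"]
      by (auto simp: null_sets_def emeasure_distr emeasure_measure_of_graphop_Times)
  qed
qed

lemma represents_measure_of_graphop: "represents M A measure_of_graphop"
proof -
  interpret edge_measure M measure_of_graphop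
    by unfold_locales (rule admissible_measure_of_graphop)
  show ?thesis
  proof (rule represents_if_rectangles[OF graphop])
    fix S T assume "S \<in> sets M" "T \<in> sets M"
    then show "op_form M A (indicator S) (indicator T) = measure measure_of_graphop (S \<times> T)"
      by (simp add: measure_def emeasure_measure_of_graphop_Times rect_mass_nonneg flip: rect_mass_def)
  qed
qed

end

theorem theorem6p3:
  fixes M :: "'a::polish_space measure"
  assumes "prob_space M" and "sets M = sets borel"
  shows "(\<forall>A. graphop M A \<longrightarrow>
            (\<exists>!N. admissible_measure M N \<and> represents M A N))
       \<and> (\<forall>N. admissible_measure M N \<longrightarrow>
            (\<exists>A. graphop M A \<and> represents M A N \<and>
               (\<forall>B. graphop M B \<and> represents M B N \<longrightarrow>
                  (\<forall>v\<in>Linf M. AE x in M. B v x = A v x))))"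
proof (intro conjI allI impI)
  fix A assume "graphop M A"
  with assms interpret polish_graphop M A
    by (simp add: polish_graphop_def polish_graphop_axioms_def graphop_on_def graphop_on_axioms_def)
  show "\<exists>!N. admissible_measure M N \<and> represents M A N"
    using admissible_measure_of_graphop represents_measure_of_graphop
      represents_measure_unique[OF assms(1)] by blast
next
  fix N assume "admissible_measure M N"
  with assms interpret edge_measure M N
    by (simp add: edge_measure_def edge_measure_axioms_def)
  show "\<exists>A. graphop M A \<and> represents M A N \<and>
      (\<forall>B. graphop M B \<and> represents M B N \<longrightarrow> (\<forall>v\<in>Linf M. AE x in M. B v x = A v x))"
    using graphop_graphop_of represents_graphop_of represents_AE_unique by blast
qed

end
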